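(* Every primary quaternion of $H_{1,2,2}$ lies in $H_{1,2,2}^0$.
   Context: Let $\mathbf{i},\mathbf{j},\mathbf{k}$ be the standard quaternion units. $H_{1,2,2}$ is the subring of the quaternions equal to the $\mathbb{Z}$-module generated by $\mathbf{v}_1=1$, $\mathbf{v}_2=\mathbf{i}$, $\mathbf{v}_3=\tfrac12(1+\mathbf{i}+\sqrt2\,\mathbf{j})$, $\mathbf{v}_4=\tfrac12(1+\mathbf{i}+\sqrt2\,\mathbf{k})$. $H_{1,2,2}^0$ is the $\mathbb{Z}$-module generated by $1,\mathbf{i},\sqrt2\,\mathbf{j},\sqrt2\,\mathbf{k}$. Let $I = 2(1+\mathbf{i})H_{1,2,2}$ (this equals $H_{1,2,2}\,2(1+\mathbf{i})$ and the two-sided ideal generated by $2(1+\mathbf{i})$). An element $\mathbf{q}\in H_{1,2,2}$ is primary if $\mathbf{q}-1\in I$ or $\mathbf{q}-(1+2\mathbf{v}_3)\in I$. *)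

theory Defs
  imports Complex_Main
begin

text \<open>Real quaternions a + b i + c j + d k, represented by their four real coordinates,
  with the Hamilton product (i^2 = j^2 = k^2 = ijk = -1).\<close>

datatype quat = Quat (qre: real) (qi: real) (qj: real) (qk: real)

definition qadd :: "quat \<Rightarrow> quat \<Rightarrow> quat" where
  "qadd p q = Quat (qre p + qre q) (qi p + qi q) (qj p + qj q) (qk p + qk q)"

definition qsub :: "quat \<Rightarrow> quat \<Rightarrow> quat" where
  "qsub p q = Quat (qre p - qre q) (qi p - qi q) (qj p - qj q) (qk p - qk q)"

definition qscale :: "real \<Rightarrow> quat \<Rightarrow> quat" where
  "qscale r q = Quat (r * qre q) (r * qi q) (r * qj q) (r * qk q)"

definition qmul :: "quat \<Rightarrow> quat \<Rightarrow> quat" where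
  "qmul p q = Quat
     (qre p * qre q - qi p * qi q - qj p * qj q - qk p * qk q)
     (qre p * qi q + qi p * qre q + qj p * qk q - qk p * qj q)
     (qre p * qj q - qi p * qk q + qj p * qre q + qk p * qi q)
     (qre p * qk q + qi p * qj q - qj p * qi q + qk p * qre q)"

definition q1 :: quat where "q1 = Quat 1 0 0 0"
definition qI :: quat where "qI = Quat 0 1 0 0"
definition qJ :: quat where "qJ = Quat 0 0 1 0"
definition qK :: quat where "qK = Quat 0 0 0 1"

definition v1 :: quat where "v1 = q1"
definition v2 :: quat where "v2 = qI"
definition v3 :: quat where
  "v3 = qscale (1/2) (qadd (qadd q1 qI) (qscale (sqrt 2) qJ))"
definition v4 :: quat where
  "v4 = qscale (1/2) (qadd (qadd q1 qI) (qscale (sqrt 2) qK))"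

definition zcomb :: "int \<Rightarrow> int \<Rightarrow> int \<Rightarrow> int \<Rightarrow> quat \<Rightarrow> quat \<Rightarrow> quat \<Rightarrow> quat \<Rightarrow> quat" where
  "zcomb a b c d x y z w =
     qadd (qadd (qscale (of_int a) x) (qscale (of_int b) y))
          (qadd (qscale (of_int c) z) (qscale (of_int d) w))"

definition H122 :: "quat set" where
  "H122 = {zcomb a b c d v1 v2 v3 v4 | a b c d. True}"

definition H122_0 :: "quat set" where
  "H122_0 = {zcomb a b c d q1 qI (qscale (sqrt 2) qJ) (qscale (sqrt 2) qK) | a b c d. True}"

definition I122 :: "quat set" where
  "I122 = {qmul (qscale 2 (qadd q1 qI)) h | h. h \<in> H122}"

definition primary :: "quat \<Rightarrow> bool" where
  "primary q \<longleftrightarrow> q \<in> H122 \<and>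
     (qsub q q1 \<in> I122 \<or> qsub q (qadd q1 (qscale 2 v3)) \<in> I122)"

end

theory Submission
  imports Defs
begin

text \<open>The coset representatives 1 and 1 + 2 v3 = 2 + i + sqrt 2 j of a primary quaternion lie in
  H_{1,2,2}^0, and so does the ideal I: left multiplication by 2(1+i) doubles the real and
  i-coordinates and turns the half-integral j- and k-parts of v3, v4 into integral multiples
  of sqrt 2. Since H_{1,2,2}^0 is closed under addition, q = (q - c) + c lies in it,
  where c is the representative with q - c in I.\<close>

lemma mem_H122_0_iff:
  "x \<in> H122_0 \<longleftrightarrow>
     (\<exists>a b c d :: int. x = Quat (of_int a) (of_int b) (of_int c * sqrt 2) (of_int d * sqrt 2))"
  by (auto simp: H122_0_def zcomb_def qadd_def qscale_def q1_def qI_def qJ_def qK_def)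

lemma H122_0_add:
  assumes "x \<in> H122_0" and "y \<in> H122_0"
  shows "qadd x y \<in> H122_0"
proof -
  from assms obtain a b c d a' b' c' d' :: int
    where "x = Quat (of_int a) (of_int b) (of_int c * sqrt 2) (of_int d * sqrt 2)"
      and "y = Quat (of_int a') (of_int b') (of_int c' * sqrt 2) (of_int d' * sqrt 2)"
    unfolding mem_H122_0_iff by blast
  then have "qadd x y = Quat (of_int (a + a')) (of_int (b + b'))
      (of_int (c + c') * sqrt 2) (of_int (d + d') * sqrt 2)"
    by (simp add: qadd_def algebra_simps)
  then show ?thesis
    unfolding mem_H122_0_iff by blast
qed

lemma qadd_qsub_cancel: "qadd (qsub x y) y = x"
  by (simp add: qadd_def qsub_def)

lemma qmul_two_one_plus_i_zcomb:
  "qmul (qscale 2 (qadd q1 qI)) (zcomb a b c d v1 v2 v3 v4) =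
     Quat (of_int (2 * (a - b))) (of_int (2 * (a + b + c + d)))
       (of_int (c - d) * sqrt 2) (of_int (c + d) * sqrt 2)"
  by (simp add: qmul_def qscale_def qadd_def zcomb_def v1_def v2_def v3_def v4_def
      q1_def qI_def qJ_def qK_def algebra_simps)

lemma I122_subset_H122_0: "I122 \<subseteq> H122_0"
proof
  fix x
  assume "x \<in> I122"
  then obtain a b c d where "x = qmul (qscale 2 (qadd q1 qI)) (zcomb a b c d v1 v2 v3 v4)"
    unfolding I122_def H122_def by blast
  then show "x \<in> H122_0"
    unfolding qmul_two_one_plus_i_zcomb mem_H122_0_iff by blast
qed

lemma q1_mem_H122_0: "q1 \<in> H122_0"
  unfolding mem_H122_0_iff q1_def by (rule exI[of _ 1]) simp

lemma one_plus_two_v3_mem_H122_0: "qadd q1 (qscale 2 v3) \<in> H122_0"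
proof -
  have "qadd q1 (qscale 2 v3) = Quat (of_int 2) (of_int 1) (of_int 1 * sqrt 2) (of_int 0 * sqrt 2)"
    by (simp add: qadd_def qscale_def v3_def q1_def qI_def qJ_def)
  then show ?thesis
    unfolding mem_H122_0_iff by blast
qed

theorem lemma13:
  fixes q :: quat
  assumes "q \<in> H122" and "primary q"
  shows "q \<in> H122_0"
proof -
  from assms(2) obtain c where "c \<in> H122_0" and "qsub q c \<in> I122"
    unfolding primary_def using q1_mem_H122_0 one_plus_two_v3_mem_H122_0 by blast
  then have "qadd (qsub q c) c \<in> H122_0"
    using I122_subset_H122_0 by (blast intro: H122_0_add)
  then show ?thesis
    by (simp add: qadd_qsub_cancel)
qed

end
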